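(* (1) If $L\subseteq A^*$ is accepted by a nondeterministic finite automaton having depth $m$, then ${\downarrow}L$ and ${\downarrow}_<L$ are $\ell$-PT for $\ell=2m+2$. (2) The same holds if $L$ is accepted by a context-free grammar in quadratic normal form with $N$ nonterminals, with $\ell=4\cdot 3^{N-1}+2$.
   Context: The depth of an automaton is the maximum length of a simple (non-repeating) path from an initial state to some final state. A context-free grammar is in quadratic normal form if every production has one of the forms $X\to YZ$, $X\to Y$, $X\to a$ or $X\to\epsilon$, where $X,Y,Z$ are nonterminals and $a$ is a terminal letter. $u\sqsubseteq v$ (subword) means $u=a_1\cdots a_n$ with letters $a_i$ and $v=v_0a_1v_1\cdots a_nv_n$; $u\sqsubset v$ means $u\sqsubseteq v$ and $u\ne v$. ${\downarrow}L=\{v~|~\exists u\in L: v\sqsubseteq u\}$, ${\downarrow}_<L=\{v~|~\exists u\in L: v\sqsubset u\}$. $u\sim_n v$ iff $u,v$ have the same subwords of length at most $n$; $L$ is $n$-PT if it is a union of $\sim_n$-classes. *)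

theory Defs
  imports Main "HOL-Library.Sublist"
begin

text \<open>Subword order: u is a (scattered) subword of v is the library's subseq u v;
  strict subword is strict_subseq.\<close>

definition down :: "'a list set \<Rightarrow> 'a list set" where
  "down L = {v. \<exists>u\<in>L. subseq v u}"

definition down_strict :: "'a list set \<Rightarrow> 'a list set" where
  "down_strict L = {v. \<exists>u\<in>L. strict_subseq v u}"

definition sim_n :: "nat \<Rightarrow> 'a list \<Rightarrow> 'a list \<Rightarrow> bool" where
  "sim_n n u v \<longleftrightarrow> (\<forall>w. length w \<le> n \<longrightarrow> (subseq w u \<longleftrightarrow> subseq w v))"

text \<open>L is n-PT iff it is a union of \<sim>n-classes, i.e. closed under \<sim>n.\<close>
definition is_PT :: "nat \<Rightarrow> 'a list set \<Rightarrow> bool" where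
  "is_PT n L \<longleftrightarrow> (\<forall>u v. sim_n n u v \<longrightarrow> (u \<in> L \<longleftrightarrow> v \<in> L))"

record ('s, 'a) nfa =
  states :: "'s set"
  init :: "'s set"
  final :: "'s set"
  trans :: "('s \<times> 'a \<times> 's) set"

definition wf_nfa :: "('s, 'a) nfa \<Rightarrow> bool" where
  "wf_nfa M \<longleftrightarrow> finite (states M) \<and> init M \<subseteq> states M \<and> final M \<subseteq> states M
     \<and> trans M \<subseteq> states M \<times> UNIV \<times> states M"

definition nfa_lang :: "('s, 'a) nfa \<Rightarrow> 'a list set" where
  "nfa_lang M = {w. \<exists>qs. length qs = Suc (length w) \<and> hd qs \<in> init M \<and> last qs \<in> final M
       \<and> (\<forall>i < length w. (qs ! i, w ! i, qs ! Suc i) \<in> trans M)}"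

definition simple_path :: "('s, 'a) nfa \<Rightarrow> 's list \<Rightarrow> bool" where
  "simple_path M qs \<longleftrightarrow> qs \<noteq> [] \<and> distinct qs \<and> hd qs \<in> init M \<and> last qs \<in> final M
       \<and> (\<forall>i. Suc i < length qs \<longrightarrow> (\<exists>a. (qs ! i, a, qs ! Suc i) \<in> trans M))"

definition nfa_depth :: "('s, 'a) nfa \<Rightarrow> nat" where
  "nfa_depth M = Max {length qs - 1 | qs. simple_path M qs}"

datatype ('n, 'a) rhs = Bin 'n 'n | UnitR 'n | Tm 'a | Eps

record ('n, 'a) cfg =
  nts :: "'n set"
  start :: 'n
  prods :: "('n \<times> ('n, 'a) rhs) set"

definition rhs_nts :: "('n, 'a) rhs \<Rightarrow> 'n set" where
  "rhs_nts r = (case r of Bin Y Z \<Rightarrow> {Y, Z} | UnitR Y \<Rightarrow> {Y} | Tm a \<Rightarrow> {} | Eps \<Rightarrow> {})"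

definition wf_qnf :: "('n, 'a) cfg \<Rightarrow> bool" where
  "wf_qnf G \<longleftrightarrow> finite (nts G) \<and> start G \<in> nts G \<and> finite (prods G)
     \<and> (\<forall>(X, r) \<in> prods G. X \<in> nts G \<and> rhs_nts r \<subseteq> nts G)"

inductive derives :: "('n \<times> ('n, 'a) rhs) set \<Rightarrow> 'n \<Rightarrow> 'a list \<Rightarrow> bool" for P where
  bin: "(X, Bin Y Z) \<in> P \<Longrightarrow> derives P Y u \<Longrightarrow> derives P Z v \<Longrightarrow> derives P X (u @ v)"
| un: "(X, UnitR Y) \<in> P \<Longrightarrow> derives P Y u \<Longrightarrow> derives P X u"
| tm: "(X, Tm a) \<in> P \<Longrightarrow> derives P X [a]"
| eps: "(X, Eps) \<in> P \<Longrightarrow> derives P X []"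

definition cfg_lang :: "('n, 'a) cfg \<Rightarrow> 'a list set" where
  "cfg_lang G = {w. derives (prods G) (start G) w}"

end

theory Submission
  imports Defs "HOL-Library.Transitive_Closure_Table"
begin

text \<open>Call an ideal a product of atoms G* (all words over a set of letters G) and a + \<epsilon>
  (at most one letter a). An ideal with k atoms is (k+1)-PT: it is downward closed, and matching
  a word greedily from the left against the atoms shows that every word outside the ideal has a
  subword of length at most k+1 outside it. So it suffices to write the downward closure and the
  strict downward closure of L as unions of ideals with few atoms.

  Let L(q) be the language accepted from state q. An accepting run from q first loops in the
  strongly connected component of q and then stops or leaves the component by one edge labelled
  a towards a state p'. Since loops can be pumped, the closure of L(q) is G* E, where G is the set
  of letters on cycles through q and E is the union of the closures of the words a L(p'). The
  state p' has smaller depth, so by induction each such exit costs the atom a + \<epsilon> on top of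
  the ideals of L(p'), giving 2d+1 atoms for depth d. If q lies on a nonempty cycle, every word
  of L(q) is a strict subword of another one and both closures coincide; otherwise L(q) consists
  of the exiting words, whose strict closure is again built from the closures of the L(p').

  For a grammar, derivations X \<Rightarrow>* u X v pump on both sides, and an exiting production
  X \<rightarrow> Y Z concatenates the closures of two nonterminals reaching strictly fewer
  nonterminals. Induction on the number n of reachable nonterminals gives at most
  4 \<cdot> 3^(n-1) + 1 atoms.\<close>

section \<open>Ideals\<close>

lemma strict_subseq_iff: "strict_subseq v u \<longleftrightarrow> subseq v u \<and> length v < length u"
  unfolding strict_subseq_def by (metis list_emb_length nat_less_le subseq_same_length)

lemma set_subseq_subset: "subseq v u \<Longrightarrow> set v \<subseteq> set u"
  by (auto elim: list_emb_set)

lemma subseq_singleton_right_iff: "subseq v [a] \<longleftrightarrow> v = [] \<or> v = [a]"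
  by (cases v) auto

definition conc :: "'a list set \<Rightarrow> 'a list set \<Rightarrow> 'a list set" where
  "conc A B = {x @ y | x y. x \<in> A \<and> y \<in> B}"

lemma conc_assoc: "conc (conc A B) C = conc A (conc B C)"
proof (intro equalityI subsetI)
  fix w assume "w \<in> conc (conc A B) C"
  then obtain x y z where "w = x @ y @ z" "x \<in> A" "y \<in> B" "z \<in> C"
    unfolding conc_def by auto
  then show "w \<in> conc A (conc B C)" unfolding conc_def by blast
next
  fix w assume "w \<in> conc A (conc B C)"
  then obtain x y z where "w = (x @ y) @ z" "x \<in> A" "y \<in> B" "z \<in> C"
    unfolding conc_def by auto
  then show "w \<in> conc (conc A B) C" unfolding conc_def by blast
qed

lemma conc_Nil [simp]: "conc {[]} B = B" "conc B {[]} = B"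
  unfolding conc_def by auto

lemma conc_empty [simp]: "conc {} B = {}" "conc B {} = {}"
  unfolding conc_def by auto

lemma conc_Nil_singleton: "conc {[], [a]} T = T \<union> Cons a ` T"
proof -
  have "conc {[a]} T = Cons a ` T" unfolding conc_def by auto
  moreover have "conc {[], [a]} T = conc {[]} T \<union> conc {[a]} T" unfolding conc_def by blast
  ultimately show ?thesis by simp
qed

datatype 'a atom = Star "'a set" | Opt 'a

fun ideal :: "'a atom list \<Rightarrow> 'a list set" where
  "ideal [] = {[]}"
| "ideal (Star G # e) = conc (lists G) (ideal e)"
| "ideal (Opt a # e) = conc {[], [a]} (ideal e)"

lemma ideal_append: "ideal (e1 @ e2) = conc (ideal e1) (ideal e2)"
  by (induction e1 rule: ideal.induct) (auto simp: conc_assoc)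

definition downward_closed :: "'a list set \<Rightarrow> bool" where
  "downward_closed D \<longleftrightarrow> (\<forall>u\<in>D. \<forall>v. subseq v u \<longrightarrow> v \<in> D)"

lemma downward_closed_empty_if_Nil_notin: "downward_closed D \<Longrightarrow> [] \<notin> D \<Longrightarrow> D = {}"
  unfolding downward_closed_def by auto

lemma downward_closed_conc:
  assumes "downward_closed A" "downward_closed B"
  shows "downward_closed (conc A B)"
  unfolding downward_closed_def
proof (intro ballI allI impI)
  fix u v assume "u \<in> conc A B" "subseq v u"
  then obtain x y where "u = x @ y" "x \<in> A" "y \<in> B" by (auto simp: conc_def)
  moreover from this obtain v1 v2 where "v = v1 @ v2" "subseq v1 x" "subseq v2 y"
    using \<open>subseq v u\<close> by (auto elim: subseq_appendE)
  ultimately show "v \<in> conc A B"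
    using assms unfolding downward_closed_def conc_def by blast
qed

lemma downward_closed_ideal: "downward_closed (ideal e)"
proof (induction e rule: ideal.induct)
  case 1
  then show ?case by (auto simp: downward_closed_def)
next
  case (2 G e)
  have "downward_closed (lists G)"
    unfolding downward_closed_def using set_subseq_subset by blast
  with 2 show ?case by (simp add: downward_closed_conc)
next
  case (3 a e)
  have "downward_closed {[], [a]}"
    unfolding downward_closed_def by (auto simp: subseq_singleton_right_iff)
  with 3 show ?case by (simp add: downward_closed_conc)
qed

definition short_witnesses :: "nat \<Rightarrow> 'a list set \<Rightarrow> bool" where
  "short_witnesses n D \<longleftrightarrow> (\<forall>v. v \<notin> D \<longrightarrow> (\<exists>w. subseq w v \<and> length w \<le> n \<and> w \<notin> D))"

lemma short_witness_Cons:
  assumes "downward_closed T" "short_witnesses n T" "x # v \<notin> T"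
  obtains u where "subseq u v" "length u \<le> n" "x # u \<notin> T"
proof -
  obtain w where w: "subseq w (x # v)" "length w \<le> n" "w \<notin> T"
    using assms(2,3) unfolding short_witnesses_def by blast
  show thesis
  proof (cases "subseq w v")
    case True
    have "x # w \<notin> T"
      using w(3) assms(1) list_emb_Cons[OF subseq_order.order_refl] unfolding downward_closed_def by blast
    with True w(2) show thesis by (rule that)
  next
    case False
    then obtain u where "w = x # u" "subseq u v" using w(1)
      by (cases w) (auto split: if_splits)
    with w show thesis using that by auto
  qed
qed

lemma short_witnesses_conc_lists:
  assumes dc: "downward_closed T" and sw: "short_witnesses n T"
  shows "short_witnesses (Suc n) (conc (lists G) T)"
  unfolding short_witnesses_def
proof (intro allI impI)
  fix v assume v: "v \<notin> conc (lists G) T"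
  show "\<exists>w. subseq w v \<and> length w \<le> Suc n \<and> w \<notin> conc (lists G) T"
  proof (cases "v \<in> lists G")
    case True
    then have "T = {}" using v dc downward_closed_empty_if_Nil_notin
      unfolding conc_def by fastforce
    then show ?thesis by auto
  next
    case False
    \<comment> \<open>Cut v before its first letter x outside G: in any factorisation of x # u
      into a word over G and a word of T, the letter x lies in the second factor.\<close>
    then obtain p x v' where pv: "v = p @ x # v'" "x \<notin> G" "p \<in> lists G"
      using split_list_first_prop[of v "\<lambda>x. x \<notin> G"] by auto
    have "x # v' \<notin> T" using v pv unfolding conc_def by blast
    then obtain u where u: "subseq u v'" "length u \<le> n" "x # u \<notin> T"
      using short_witness_Cons[OF dc sw] by blast
    have "x # u \<notin> conc (lists G) T"
    proof
      assume "x # u \<in> conc (lists G) T"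
      then obtain s t where "x # u = s @ t" "s \<in> lists G" "t \<in> T" by (auto simp: conc_def)
      with pv(2) u(3) show False by (cases s) auto
    qed
    moreover have "subseq (x # u) v" using pv(1) u(1) by (simp add: list_emb_append2)
    ultimately show ?thesis using u(2) by (intro exI[of _ "x # u"]) auto
  qed
qed

lemma short_witnesses_conc_opt:
  assumes dc: "downward_closed T" and sw: "short_witnesses n T"
  shows "short_witnesses (Suc n) (conc {[], [a]} T)"
  unfolding short_witnesses_def conc_Nil_singleton
proof (intro allI impI)
  fix v assume v: "v \<notin> T \<union> Cons a ` T"
  show "\<exists>w. subseq w v \<and> length w \<le> Suc n \<and> w \<notin> T \<union> Cons a ` T"
  proof (cases v)
    case Nil
    then show ?thesis using v dc downward_closed_empty_if_Nil_notin by auto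
  next
    case (Cons x v')
    show ?thesis
    proof (cases "x = a")
      case True
      then obtain w where w: "subseq w v'" "length w \<le> n" "w \<notin> T"
        using v Cons sw unfolding short_witnesses_def by blast
      then have "a # w \<notin> T"
        using dc list_emb_Cons[OF subseq_order.order_refl] unfolding downward_closed_def by blast
      then show ?thesis using w Cons True by (intro exI[of _ "a # w"]) auto
    next
      case False
      then obtain u where "subseq u v'" "length u \<le> n" "x # u \<notin> T"
        using short_witness_Cons[OF dc sw] v Cons by blast
      then show ?thesis using False Cons by (intro exI[of _ "x # u"]) auto
    qed
  qed
qed

lemma short_witnesses_ideal: "short_witnesses (Suc (length e)) (ideal e)"
proof (induction e rule: ideal.induct)
  case 1
  show ?case unfolding short_witnesses_def
  proof (intro allI impI)
    fix v :: "'a list" assume "v \<notin> ideal []"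
    then obtain x v' where "v = x # v'" by (cases v) auto
    then show "\<exists>w. subseq w v \<and> length w \<le> Suc (length []) \<and> w \<notin> ideal []"
      by (intro exI[of _ "[x]"]) auto
  qed
next
  case (2 G e)
  then show ?case by (simp add: short_witnesses_conc_lists downward_closed_ideal)
next
  case (3 a e)
  then show ?case by (simp add: short_witnesses_conc_opt downward_closed_ideal)
qed

lemma is_PT_if_short_witnesses:
  assumes dc: "downward_closed D" and sw: "short_witnesses n D"
  shows "is_PT n D"
proof -
  have "x \<in> D" if "y \<in> D" "sim_n n y x" for x y
  proof (rule ccontr)
    assume "x \<notin> D"
    then obtain z where "subseq z x" "length z \<le> n" "z \<notin> D"
      using sw unfolding short_witnesses_def by blast
    with that dc show False unfolding sim_n_def downward_closed_def by blast
  qed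
  moreover have "sim_n n u v \<Longrightarrow> sim_n n v u" for u v :: "'a list"
    unfolding sim_n_def by blast
  ultimately show ?thesis unfolding is_PT_def by blast
qed

lemma is_PT_mono: "is_PT n D \<Longrightarrow> n \<le> n' \<Longrightarrow> is_PT n' D"
  unfolding is_PT_def sim_n_def by (meson order_trans)

lemma is_PT_Union: "(\<And>D. D \<in> S \<Longrightarrow> is_PT n D) \<Longrightarrow> is_PT n (\<Union>S)"
  unfolding is_PT_def by blast

definition ideal_union :: "nat \<Rightarrow> 'a list set \<Rightarrow> bool" where
  "ideal_union n D \<longleftrightarrow> (\<exists>I. D = \<Union>(ideal ` I) \<and> (\<forall>e\<in>I. length e \<le> n))"

lemma is_PT_ideal_union:
  assumes "ideal_union n D"
  shows "is_PT (Suc n) D"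
proof -
  obtain I where I: "D = \<Union>(ideal ` I)" "\<forall>e\<in>I. length e \<le> n"
    using assms unfolding ideal_union_def by blast
  have "is_PT (Suc n) (ideal e)" if "e \<in> I" for e
    by (rule is_PT_mono[OF is_PT_if_short_witnesses[OF downward_closed_ideal short_witnesses_ideal]])
      (use I(2) that in auto)
  then show ?thesis using I(1) is_PT_Union[of "ideal ` I"] by blast
qed

lemma ideal_union_mono: "ideal_union n D \<Longrightarrow> n \<le> n' \<Longrightarrow> ideal_union n' D"
  unfolding ideal_union_def by (blast intro: le_trans)

lemma ideal_union_empty: "ideal_union n {}"
  unfolding ideal_union_def by (intro exI[of _ "{}"]) auto

lemma ideal_union_Nil: "ideal_union n {[]}"
  unfolding ideal_union_def by (intro exI[of _ "{[]}"]) auto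

lemma ideal_union_lists: "ideal_union 1 (lists G)"
  unfolding ideal_union_def by (intro exI[of _ "{[Star G]}"]) auto

lemma ideal_union_opt: "ideal_union 1 {[], [a]}"
  unfolding ideal_union_def by (intro exI[of _ "{[Opt a]}"]) auto

lemma ideal_union_Un: "ideal_union n A \<Longrightarrow> ideal_union n B \<Longrightarrow> ideal_union n (A \<union> B)"
  unfolding ideal_union_def by (metis Un_iff image_Un Union_Un_distrib)

lemma ideal_union_UN: "(\<And>i. i \<in> S \<Longrightarrow> ideal_union n (D i)) \<Longrightarrow> ideal_union n (\<Union>i\<in>S. D i)"
proof -
  assume "\<And>i. i \<in> S \<Longrightarrow> ideal_union n (D i)"
  then obtain f where f: "\<forall>i\<in>S. D i = \<Union>(ideal ` f i) \<and> (\<forall>e\<in>f i. length e \<le> n)"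
    unfolding ideal_union_def by metis
  show ?thesis unfolding ideal_union_def
    by (intro exI[of _ "\<Union>i\<in>S. f i"]) (use f in auto)
qed

lemma ideal_union_conc:
  assumes "ideal_union n1 A" "ideal_union n2 B"
  shows "ideal_union (n1 + n2) (conc A B)"
proof -
  obtain I1 I2 where I: "A = \<Union>(ideal ` I1)" "\<forall>e\<in>I1. length e \<le> n1"
     "B = \<Union>(ideal ` I2)" "\<forall>e\<in>I2. length e \<le> n2"
    using assms unfolding ideal_union_def by blast
  have "conc A B = (\<Union>e1\<in>I1. \<Union>e2\<in>I2. ideal (e1 @ e2))"
    unfolding ideal_append I(1,3) conc_def by blast
  also have "\<dots> = \<Union>(ideal ` {e1 @ e2 | e1 e2. e1 \<in> I1 \<and> e2 \<in> I2})"
    by blast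
  finally show ?thesis unfolding ideal_union_def using I(2,4)
    by (intro exI[of _ "{e1 @ e2 | e1 e2. e1 \<in> I1 \<and> e2 \<in> I2}"]) (auto intro!: add_mono)
qed

section \<open>Downward closures\<close>

lemma down_Un: "down (A \<union> B) = down A \<union> down B"
  unfolding down_def by auto

lemma down_UN: "down (\<Union>i\<in>S. A i) = (\<Union>i\<in>S. down (A i))"
  unfolding down_def by auto

lemma down_strict_Un: "down_strict (A \<union> B) = down_strict A \<union> down_strict B"
  unfolding down_strict_def by auto

lemma down_strict_UN: "down_strict (\<Union>i\<in>S. A i) = (\<Union>i\<in>S. down_strict (A i))"
  unfolding down_strict_def by auto

lemma down_strict_subset_down: "down_strict A \<subseteq> down A"
  unfolding down_def down_strict_def strict_subseq_def by auto

lemma down_Nil: "down {[]} = {[]}"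
  unfolding down_def by auto

lemma down_strict_Nil: "down_strict {[]} = {}"
  unfolding down_strict_def strict_subseq_def by auto

lemma down_singleton: "down {[a]} = {[], [a]}"
  unfolding down_def by (auto simp: subseq_singleton_right_iff)

lemma down_strict_singleton: "down_strict {[a]} = {[]}"
  unfolding down_strict_def strict_subseq_def by (auto simp: subseq_singleton_right_iff)

lemma down_lists: "down (lists G) = lists G"
  unfolding down_def using set_subseq_subset by auto

lemma down_conc: "down (conc A B) = conc (down A) (down B)"
proof (intro equalityI subsetI)
  fix v assume "v \<in> down (conc A B)"
  then obtain x y where "subseq v (x @ y)" "x \<in> A" "y \<in> B"
    unfolding down_def conc_def by blast
  then show "v \<in> conc (down A) (down B)"
    unfolding down_def conc_def by (blast elim: subseq_appendE)
next
  fix v assume "v \<in> conc (down A) (down B)"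
  then show "v \<in> down (conc A B)"
    unfolding down_def conc_def by (blast intro: list_emb_append_mono)
qed

lemma down_strict_conc:
  "down_strict (conc A B) = conc (down_strict A) (down B) \<union> conc (down A) (down_strict B)"
proof (intro equalityI subsetI)
  fix v assume "v \<in> down_strict (conc A B)"
  then obtain x y where s: "strict_subseq v (x @ y)" "x \<in> A" "y \<in> B"
    unfolding down_strict_def conc_def by blast
  then obtain v1 v2 where v: "v = v1 @ v2" "subseq v1 x" "subseq v2 y"
    by (auto simp: strict_subseq_iff elim: subseq_appendE)
  have "length v1 < length x \<or> length v2 < length y"
    using v list_emb_length[OF v(2)] list_emb_length[OF v(3)] s(1)
    by (simp add: strict_subseq_iff, linarith)
  then show "v \<in> conc (down_strict A) (down B) \<union> conc (down A) (down_strict B)"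
    unfolding down_def down_strict_def conc_def strict_subseq_iff using s(2,3) v by blast
next
  fix v assume "v \<in> conc (down_strict A) (down B) \<union> conc (down A) (down_strict B)"
  then obtain v1 v2 x y where "v = v1 @ v2" "subseq v1 x" "subseq v2 y" "x \<in> A" "y \<in> B"
    "length v1 < length x \<or> length v2 < length y"
    unfolding conc_def down_def down_strict_def strict_subseq_iff by blast
  moreover from this have "strict_subseq v (x @ y)"
    using list_emb_length by (fastforce simp: strict_subseq_iff list_emb_append_mono)
  ultimately show "v \<in> down_strict (conc A B)" unfolding down_strict_def conc_def by blast
qed

lemma down_eq_if_between: "A \<subseteq> B \<Longrightarrow> B \<subseteq> down A \<Longrightarrow> down A = down B"
  unfolding down_def using subseq_order.trans by blast

lemma down_strict_eq_down:
  assumes "\<And>w. w \<in> L \<Longrightarrow> \<exists>w'\<in>L. strict_subseq w w'"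
  shows "down_strict L = down L"
proof
  show "down L \<subseteq> down_strict L"
  proof
    fix v assume "v \<in> down L"
    then obtain w where "w \<in> L" "subseq v w" unfolding down_def by blast
    moreover from \<open>w \<in> L\<close> obtain w' where "w' \<in> L" "strict_subseq w w'" using assms by blast
    ultimately show "v \<in> down_strict L"
      unfolding down_strict_def using subseq_order.le_less_trans by blast
  qed
qed (rule down_strict_subset_down)

definition ideal_closures :: "nat \<Rightarrow> 'a list set \<Rightarrow> bool" where
  "ideal_closures n L \<longleftrightarrow> ideal_union n (down L) \<and> ideal_union n (down_strict L)"

lemma is_PT_if_ideal_closures:
  "ideal_closures n L \<Longrightarrow> is_PT (Suc n) (down L) \<and> is_PT (Suc n) (down_strict L)"
  unfolding ideal_closures_def by (simp add: is_PT_ideal_union)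

lemma ideal_closures_mono: "ideal_closures n L \<Longrightarrow> n \<le> n' \<Longrightarrow> ideal_closures n' L"
  unfolding ideal_closures_def by (blast intro: ideal_union_mono)

lemma ideal_closures_empty: "ideal_closures n {}"
  unfolding ideal_closures_def down_def down_strict_def by (simp add: ideal_union_empty)

lemma ideal_closures_Nil: "ideal_closures n {[]}"
  unfolding ideal_closures_def down_Nil down_strict_Nil
  by (intro conjI ideal_union_Nil ideal_union_empty)

lemma ideal_closures_singleton: "ideal_closures 1 {[a]}"
  unfolding ideal_closures_def down_singleton down_strict_singleton
  by (intro conjI ideal_union_opt ideal_union_Nil)

lemma ideal_closures_UN:
  "(\<And>i. i \<in> S \<Longrightarrow> ideal_closures n (A i)) \<Longrightarrow> ideal_closures n (\<Union>i\<in>S. A i)"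
  unfolding ideal_closures_def down_UN down_strict_UN by (simp add: ideal_union_UN)

lemma ideal_closures_Un:
  "ideal_closures n A \<Longrightarrow> ideal_closures n B \<Longrightarrow> ideal_closures n (A \<union> B)"
  unfolding ideal_closures_def down_Un down_strict_Un by (simp add: ideal_union_Un)

lemma ideal_closures_conc:
  "ideal_closures n1 A \<Longrightarrow> ideal_closures n2 B \<Longrightarrow> ideal_closures (n1 + n2) (conc A B)"
  unfolding ideal_closures_def down_conc down_strict_conc
  by (simp add: ideal_union_conc ideal_union_Un)

section \<open>Finite automata\<close>

definition nfa_edge :: "('s, 'a) nfa \<Rightarrow> 's \<Rightarrow> 's \<Rightarrow> bool" where
  "nfa_edge M p q \<longleftrightarrow> (\<exists>a. (p, a, q) \<in> trans M)"

inductive run :: "('s, 'a) nfa \<Rightarrow> 's \<Rightarrow> 'a list \<Rightarrow> 's \<Rightarrow> bool" for M where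
  run_Nil: "run M p [] p"
| run_Cons: "(p, a, r) \<in> trans M \<Longrightarrow> run M r w s \<Longrightarrow> run M p (a # w) s"

definition state_lang :: "('s, 'a) nfa \<Rightarrow> 's \<Rightarrow> 'a list set" where
  "state_lang M q = {w. \<exists>f\<in>final M. run M q w f}"

lemma run_Nil_iff: "run M p [] s \<longleftrightarrow> p = s"
  by (auto elim: run.cases intro: run.intros)

lemma run_Cons_iff: "run M p (a # w) s \<longleftrightarrow> (\<exists>r. (p, a, r) \<in> trans M \<and> run M r w s)"
  by (auto elim: run.cases intro: run.intros)

lemma run_append: "run M p u r \<Longrightarrow> run M r v s \<Longrightarrow> run M p (u @ v) s"
  by (induction rule: run.induct) (simp_all add: run_Cons)

lemma rtranclp_nfa_edge_if_run: "run M p w s \<Longrightarrow> (nfa_edge M)\<^sup>*\<^sup>* p s"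
  by (induction rule: run.induct) (auto simp: nfa_edge_def intro: converse_rtranclp_into_rtranclp)

lemma run_if_rtranclp_nfa_edge: "(nfa_edge M)\<^sup>*\<^sup>* p s \<Longrightarrow> \<exists>w. run M p w s"
  by (induction rule: converse_rtranclp_induct) (auto simp: nfa_edge_def intro: run.intros)

lemma run_iff_state_list:
  "run M p w s \<longleftrightarrow> (\<exists>qs. length qs = Suc (length w) \<and> hd qs = p \<and> last qs = s
       \<and> (\<forall>i < length w. (qs ! i, w ! i, qs ! Suc i) \<in> trans M))" (is "_ \<longleftrightarrow> ?states w p")
proof (induction w arbitrary: p)
  case Nil
  have "?states [] p \<longleftrightarrow> p = s"
    by (auto simp: length_Suc_conv intro: exI[of _ "[p]"])
  then show ?case by (simp add: run_Nil_iff)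
next
  case (Cons a w)
  have "?states (a # w) p \<longleftrightarrow> (\<exists>r. (p, a, r) \<in> trans M \<and> ?states w r)"
  proof
    assume "?states (a # w) p"
    then obtain qs where qs: "length qs = Suc (Suc (length w))" "hd qs = p" "last qs = s"
      "\<forall>i < Suc (length w). (qs ! i, (a # w) ! i, qs ! Suc i) \<in> trans M"
      by auto
    then obtain qs' where qs': "qs = p # qs'" "length qs' = Suc (length w)" by (cases qs) auto
    then have "qs' \<noteq> []" by auto
    have "(p, a, hd qs') \<in> trans M"
      using qs(4)[rule_format, of 0] qs'(1) \<open>qs' \<noteq> []\<close> by (simp add: hd_conv_nth)
    moreover have "(qs' ! i, w ! i, qs' ! Suc i) \<in> trans M" if "i < length w" for i
      using qs(4)[rule_format, of "Suc i"] qs'(1) that by simp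
    moreover have "last qs' = s" using qs(3) qs'(1) \<open>qs' \<noteq> []\<close> by simp
    ultimately show "\<exists>r. (p, a, r) \<in> trans M \<and> ?states w r" using qs'(2) by blast
  next
    assume "\<exists>r. (p, a, r) \<in> trans M \<and> ?states w r"
    then obtain qs where "(p, a, hd qs) \<in> trans M" "length qs = Suc (length w)" "last qs = s"
      "\<forall>i < length w. (qs ! i, w ! i, qs ! Suc i) \<in> trans M"
      by blast
    then show "?states (a # w) p"
      by (intro exI[of _ "p # qs"]) (auto simp: less_Suc_eq_0_disj hd_conv_nth)
  qed
  then show ?case using Cons.IH by (simp add: run_Cons_iff)
qed

lemma nfa_lang_eq_UN_state_lang: "nfa_lang M = (\<Union>q\<in>init M. state_lang M q)"
  unfolding nfa_lang_def state_lang_def run_iff_state_list by blast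

definition nfa_scc :: "('s, 'a) nfa \<Rightarrow> 's \<Rightarrow> 's set" where
  "nfa_scc M q = {p. (nfa_edge M)\<^sup>*\<^sup>* q p \<and> (nfa_edge M)\<^sup>*\<^sup>* p q}"

lemma runs_if_nfa_scc:
  assumes "p \<in> nfa_scc M q"
  shows "\<exists>u. run M q u p" "\<exists>v. run M p v q"
  using assms unfolding nfa_scc_def by (auto dest: run_if_rtranclp_nfa_edge)

definition nfa_loop_letters :: "('s, 'a) nfa \<Rightarrow> 's \<Rightarrow> 'a set" where
  "nfa_loop_letters M q = {b. \<exists>w. run M q w q \<and> b \<in> set w}"

definition nfa_exit_lang :: "('s, 'a) nfa \<Rightarrow> 's set \<Rightarrow> 's \<Rightarrow> 'a list set" where
  "nfa_exit_lang M C p = (if p \<in> final M then {[]} else {})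
     \<union> (\<Union>(a, p')\<in>{(a, p'). (p, a, p') \<in> trans M \<and> p' \<notin> C}. conc {[a]} (state_lang M p'))"

definition depth_le :: "('s, 'a) nfa \<Rightarrow> 's \<Rightarrow> nat \<Rightarrow> bool" where
  "depth_le M q d \<longleftrightarrow> (\<forall>xs f. f \<in> final M \<longrightarrow> rtrancl_path (nfa_edge M) q xs f
      \<longrightarrow> distinct (q # xs) \<longrightarrow> length xs \<le> d)"

lemma run_split_at_exit:
  assumes "run M p w f" "f \<in> final M" "p \<in> C"
  shows "\<exists>u p1 e. run M p u p1 \<and> p1 \<in> C \<and> w = u @ e \<and> e \<in> nfa_exit_lang M C p1"
  using assms
proof (induction rule: run.induct)
  case (run_Nil p)
  then show ?case using run.run_Nil[of M p] unfolding nfa_exit_lang_def by fastforce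
next
  case (run_Cons p a r w s)
  show ?case
  proof (cases "r \<in> C")
    case True
    then show ?thesis using run_Cons by (metis append_Cons run.run_Cons)
  next
    case False
    then have "a # w \<in> nfa_exit_lang M C p"
      using run_Cons unfolding nfa_exit_lang_def state_lang_def conc_def by force
    then show ?thesis using run.run_Nil[of M p] run_Cons.prems by fastforce
  qed
qed

lemma nfa_exit_lang_subset: "nfa_exit_lang M C p \<subseteq> state_lang M p"
  unfolding nfa_exit_lang_def state_lang_def conc_def by (auto intro: run.intros)

lemma rtranclp_through_rtrancl_path:
  assumes "rtrancl_path r x xs y" "z \<in> set xs"
  shows "r\<^sup>*\<^sup>* x z \<and> r\<^sup>*\<^sup>* z y"
proof -
  obtain ys zs where "xs = ys @ z # zs" using assms(2) split_list by metis
  with assms(1) show ?thesis by (metis rtrancl_path_appendE rtranclp_eq_rtrancl_path)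
qed

text \<open>A simple path leaving the component of q extends a simple path inside it, so it is
  shorter than the depth.\<close>
lemma depth_le_exit:
  assumes "depth_le M q d" "p1 \<in> nfa_scc M q" "(p1, a, p') \<in> trans M" "p' \<notin> nfa_scc M q"
    "f \<in> final M" "rtrancl_path (nfa_edge M) p' ys f" "distinct (p' # ys)"
  shows "Suc (length ys) \<le> d"
proof -
  let ?C = "nfa_scc M q"
  have qp1: "(nfa_edge M)\<^sup>*\<^sup>* q p1" and p1q: "(nfa_edge M)\<^sup>*\<^sup>* p1 q"
    using assms(2) unfolding nfa_scc_def by auto
  obtain xs where xs: "rtrancl_path (nfa_edge M) q xs p1" "distinct (q # xs)"
    using qp1 rtranclp_eq_rtrancl_path rtrancl_path_distinct by metis
  have edge: "nfa_edge M p1 p'" using assms(3) unfolding nfa_edge_def by blast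
  have "set (q # xs) \<subseteq> ?C"
    using xs(1) p1q rtranclp_through_rtrancl_path unfolding nfa_scc_def
    by (fastforce intro: rtranclp_trans)
  moreover have "set (p' # ys) \<inter> ?C = {}"
  proof -
    have "\<not> (nfa_edge M)\<^sup>*\<^sup>* p' q"
      using assms(4) qp1 edge unfolding nfa_scc_def by (auto intro: rtranclp.rtrancl_into_rtrancl)
    then show ?thesis
      using assms(6) rtranclp_through_rtrancl_path unfolding nfa_scc_def
      by (fastforce intro: rtranclp_trans)
  qed
  ultimately have "distinct (q # xs @ p' # ys)" using xs(2) assms(7) by auto
  moreover have "rtrancl_path (nfa_edge M) q (xs @ p' # ys) f"
    using xs(1) rtrancl_path.step[OF edge assms(6)] by (rule rtrancl_path_trans)
  ultimately show ?thesis using assms(1,5) unfolding depth_le_def by fastforce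
qed

lemma depth_le_after_exit:
  assumes "depth_le M q d" "p1 \<in> nfa_scc M q" "(p1, a, p') \<in> trans M" "p' \<notin> nfa_scc M q"
    and "state_lang M p' \<noteq> {}"
  shows "0 < d" "depth_le M p' (d - 1)"
proof -
  obtain w f where "f \<in> final M" "run M p' w f" using assms(5) unfolding state_lang_def by blast
  then obtain ys where "rtrancl_path (nfa_edge M) p' ys f" "distinct (p' # ys)"
    using rtranclp_nfa_edge_if_run rtranclp_eq_rtrancl_path rtrancl_path_distinct by metis
  then show "0 < d" using depth_le_exit[OF assms(1-4) \<open>f \<in> final M\<close>] by fastforce
  show "depth_le M p' (d - 1)"
    using depth_le_exit[OF assms(1-4)] unfolding depth_le_def by fastforce
qed

lemma nfa_loop_letters_pump: "s \<in> lists (nfa_loop_letters M q) \<Longrightarrow> \<exists>U. run M q U q \<and> subseq s U"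
proof (induction s)
  case Nil
  then show ?case using run.run_Nil[of M q] by auto
next
  case (Cons b s)
  then obtain U where U: "run M q U q" "subseq s U" by auto
  obtain w where w: "run M q w q" "b \<in> set w"
    using Cons(2) unfolding nfa_loop_letters_def by auto
  have "subseq ([b] @ s) (w @ U)"
    using U(2) w(2) by (intro list_emb_append_mono) (auto simp: subseq_singleton_left)
  with run_append[OF w(1) U(1)] show ?case by auto
qed

text \<open>Every accepted run from q loops in the component of q and then exits it; the loops can be
  pumped to contain any word over the loop letters.\<close>
lemma down_state_lang:
  fixes M :: "('s, 'a) nfa" and q :: 's
  defines "C \<equiv> nfa_scc M q"
  shows "down (state_lang M q) =
    conc (lists (nfa_loop_letters M q)) (down (\<Union>p\<in>C. nfa_exit_lang M C p))"
proof -
  let ?G = "nfa_loop_letters M q" and ?E = "\<Union>p\<in>C. nfa_exit_lang M C p"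
  have "state_lang M q \<subseteq> conc (lists ?G) ?E"
  proof
    fix w assume "w \<in> state_lang M q"
    then obtain f where "f \<in> final M" "run M q w f" unfolding state_lang_def by blast
    moreover have "q \<in> C" unfolding C_def nfa_scc_def by simp
    ultimately obtain u p e where ue: "run M q u p" "p \<in> C" "w = u @ e" "e \<in> nfa_exit_lang M C p"
      using run_split_at_exit by metis
    from runs_if_nfa_scc(2)[OF ue(2)[unfolded C_def]] obtain u' where "run M p u' q" ..
    then have "u \<in> lists ?G"
      using run_append[OF ue(1)] unfolding nfa_loop_letters_def by fastforce
    then show "w \<in> conc (lists ?G) ?E" unfolding conc_def using ue by blast
  qed
  moreover have "conc (lists ?G) ?E \<subseteq> down (state_lang M q)"
  proof
    fix x assume "x \<in> conc (lists ?G) ?E"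
    then obtain s e p where se: "x = s @ e" "s \<in> lists ?G" "p \<in> C" "e \<in> nfa_exit_lang M C p"
      unfolding conc_def by blast
    obtain U where U: "run M q U q" "subseq s U" using nfa_loop_letters_pump[OF se(2)] by blast
    from runs_if_nfa_scc(1)[OF se(3)[unfolded C_def]] obtain u where u: "run M q u p" ..
    have "e \<in> state_lang M p" by (rule subsetD[OF nfa_exit_lang_subset se(4)])
    then obtain f where f: "f \<in> final M" "run M p e f" unfolding state_lang_def by blast
    have "U @ u @ e \<in> state_lang M q"
      using run_append[OF U(1) run_append[OF u f(2)]] f(1) unfolding state_lang_def by blast
    moreover have "subseq (s @ e) (U @ u @ e)"
      using U(2) by (intro list_emb_append_mono) (auto simp: list_emb_append2)
    ultimately show "x \<in> down (state_lang M q)" unfolding down_def using se(1) by auto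
  qed
  ultimately have "down (state_lang M q) = down (conc (lists ?G) ?E)" by (rule down_eq_if_between)
  then show ?thesis by (simp add: down_conc down_lists)
qed

lemma state_lang_eq_exit_lang_if_acyclic:
  assumes "\<And>c. run M q c q \<Longrightarrow> c = []"
  shows "state_lang M q = nfa_exit_lang M (nfa_scc M q) q"
proof
  show "state_lang M q \<subseteq> nfa_exit_lang M (nfa_scc M q) q"
  proof
    fix w assume "w \<in> state_lang M q"
    then obtain f where "f \<in> final M" "run M q w f" unfolding state_lang_def by blast
    moreover have "q \<in> nfa_scc M q" unfolding nfa_scc_def by simp
    ultimately obtain u p e where ue: "run M q u p" "p \<in> nfa_scc M q" "w = u @ e"
      "e \<in> nfa_exit_lang M (nfa_scc M q) p"
      using run_split_at_exit by metis
    obtain u' where "run M p u' q" using runs_if_nfa_scc(2)[OF ue(2)] by blast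
    then have "u = []" using assms run_append[OF ue(1)] by blast
    then show "w \<in> nfa_exit_lang M (nfa_scc M q) q" using ue by (simp add: run_Nil_iff)
  qed
qed (rule nfa_exit_lang_subset)

lemma down_strict_state_lang_if_cycle:
  assumes "run M q c q" "c \<noteq> []"
  shows "down_strict (state_lang M q) = down (state_lang M q)"
proof (rule down_strict_eq_down)
  fix w assume "w \<in> state_lang M q"
  then have "c @ w \<in> state_lang M q"
    using run_append[OF assms(1)] unfolding state_lang_def by blast
  moreover have "strict_subseq w (c @ w)"
    using assms(2) by (simp add: strict_subseq_iff list_emb_append2)
  ultimately show "\<exists>w'\<in>state_lang M q. strict_subseq w w'" by blast
qed

text \<open>Each exit costs one atom a + \<epsilon> on top of a state of smaller depth.\<close>
lemma ideal_closures_nfa_exit_lang: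
  assumes IH: "\<And>d' p'. d' < d \<Longrightarrow> depth_le M p' d' \<Longrightarrow> ideal_closures (2 * d' + 1) (state_lang M p')"
    and q: "depth_le M q d" and p: "p \<in> nfa_scc M q"
  shows "ideal_closures (2 * d) (nfa_exit_lang M (nfa_scc M q) p)"
proof -
  have exit: "ideal_closures (2 * d) (conc {[a]} (state_lang M p'))"
    if "(p, a, p') \<in> trans M" "p' \<notin> nfa_scc M q" for a p'
  proof (cases "state_lang M p' = {}")
    case True
    then show ?thesis by (simp add: ideal_closures_empty)
  next
    case False
    note d = depth_le_after_exit[OF q p that False]
    have "ideal_closures (1 + (2 * (d - 1) + 1)) (conc {[a]} (state_lang M p'))"
      using ideal_closures_singleton IH[OF _ d(2)] d(1) by (intro ideal_closures_conc) auto
    moreover have "1 + (2 * (d - 1) + 1) = 2 * d" using d(1) by (cases d) simp_all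
    ultimately show ?thesis by simp
  qed
  show ?thesis
    unfolding nfa_exit_lang_def
  proof (intro ideal_closures_Un ideal_closures_UN)
    show "ideal_closures (2 * d) (if p \<in> final M then {[]} else {})"
      by (simp add: ideal_closures_Nil ideal_closures_empty)
  qed (use exit in auto)
qed

lemma ideal_closures_state_lang: "depth_le M q d \<Longrightarrow> ideal_closures (2 * d + 1) (state_lang M q)"
proof (induction d arbitrary: q rule: less_induct)
  case (less d q)
  let ?C = "nfa_scc M q"
  have exit_lang: "ideal_closures (2 * d) (nfa_exit_lang M ?C p)" if "p \<in> ?C" for p
    using ideal_closures_nfa_exit_lang[OF less.IH less.prems that] .
  have "ideal_closures (2 * d) (\<Union>p\<in>?C. nfa_exit_lang M ?C p)"
    by (rule ideal_closures_UN) (rule exit_lang)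
  then have "ideal_union (1 + 2 * d) (down (state_lang M q))"
    unfolding down_state_lang ideal_closures_def by (intro ideal_union_conc ideal_union_lists) simp
  then have down: "ideal_union (2 * d + 1) (down (state_lang M q))" by simp
  show ?case
  proof (cases "\<exists>c. run M q c q \<and> c \<noteq> []")
    case True
    then obtain c where "run M q c q" "c \<noteq> []" by blast
    from down_strict_state_lang_if_cycle[OF this] down show ?thesis
      unfolding ideal_closures_def by simp
  next
    case False
    then have "state_lang M q = nfa_exit_lang M ?C q"
      by (intro state_lang_eq_exit_lang_if_acyclic) blast
    moreover have "q \<in> ?C" unfolding nfa_scc_def by simp
    ultimately have "ideal_union (2 * d) (down_strict (state_lang M q))"
      using exit_lang unfolding ideal_closures_def by simp
    with down show ?thesis unfolding ideal_closures_def by (simp add: ideal_union_mono)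
  qed
qed

lemma simple_path_states:
  assumes "wf_nfa M" "simple_path M qs"
  shows "set qs \<subseteq> states M"
proof
  fix x assume "x \<in> set qs"
  then obtain i where i: "i < length qs" "qs ! i = x" by (auto simp: in_set_conv_nth)
  show "x \<in> states M"
  proof (cases i)
    case 0
    then have "x = hd qs" using i assms(2) unfolding simple_path_def by (simp add: hd_conv_nth)
    then show ?thesis using assms unfolding simple_path_def wf_nfa_def by blast
  next
    case (Suc j)
    then obtain a where "(qs ! j, a, qs ! Suc j) \<in> trans M"
      using assms(2) i(1) unfolding simple_path_def by blast
    then show ?thesis using assms(1) i(2) Suc unfolding wf_nfa_def by blast
  qed
qed

lemma finite_simple_path_lengths:
  assumes "wf_nfa M"
  shows "finite {length qs - 1 | qs. simple_path M qs}"
proof -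
  let ?S = "states M"
  have fin: "finite ?S" using assms unfolding wf_nfa_def by blast
  have "{length qs - 1 | qs. simple_path M qs} \<subseteq>
      (\<lambda>qs. length qs - 1) ` {qs. set qs \<subseteq> ?S \<and> length qs \<le> card ?S}"
  proof
    fix n assume "n \<in> {length qs - 1 | qs. simple_path M qs}"
    then obtain qs where qs: "n = length qs - 1" "simple_path M qs" by blast
    have "set qs \<subseteq> ?S" using simple_path_states[OF assms qs(2)] .
    moreover have "length qs \<le> card ?S"
      using qs(2) calculation fin unfolding simple_path_def by (metis card_mono distinct_card)
    ultimately show "n \<in> (\<lambda>qs. length qs - 1) ` {qs. set qs \<subseteq> ?S \<and> length qs \<le> card ?S}"
      using qs(1) by blast
  qed
  moreover have "finite {qs. set qs \<subseteq> ?S \<and> length qs \<le> card ?S}"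
    using finite_lists_length_le[OF fin] by blast
  ultimately show ?thesis using finite_subset by blast
qed

lemma depth_le_init:
  assumes "wf_nfa M" "q \<in> init M"
  shows "depth_le M q (nfa_depth M)"
  unfolding depth_le_def
proof (intro allI impI)
  fix xs f
  assume f: "f \<in> final M" and p: "rtrancl_path (nfa_edge M) q xs f" and d: "distinct (q # xs)"
  have "last (q # xs) = f"
    using p by (cases xs) (auto elim: rtrancl_path.cases dest: rtrancl_path_last)
  moreover have "\<forall>i. Suc i < length (q # xs) \<longrightarrow>
      (\<exists>a. ((q # xs) ! i, a, (q # xs) ! Suc i) \<in> trans M)"
    using rtrancl_path_nth[OF p] unfolding nfa_edge_def by simp
  ultimately have "simple_path M (q # xs)"
    unfolding simple_path_def using assms(2) f d by simp
  then have "length (q # xs) - 1 \<le> nfa_depth M"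
    unfolding nfa_depth_def using finite_simple_path_lengths[OF assms(1)] by (blast intro: Max_ge)
  then show "length xs \<le> nfa_depth M" by simp
qed

lemma ideal_closures_nfa_lang:
  assumes "wf_nfa M"
  shows "ideal_closures (2 * nfa_depth M + 1) (nfa_lang M)"
  unfolding nfa_lang_eq_UN_state_lang
  using ideal_closures_state_lang[OF depth_le_init[OF assms]] by (rule ideal_closures_UN)

section \<open>Context-free grammars\<close>

text \<open>derives_ctx P X u Y v: X derives the sentential form u Y v.\<close>
inductive derives_ctx :: "('n \<times> ('n, 'a) rhs) set \<Rightarrow> 'n \<Rightarrow> 'a list \<Rightarrow> 'n \<Rightarrow> 'a list \<Rightarrow> bool"
  for P where
  ctx_refl: "derives_ctx P X [] X []"
| ctx_unit: "(X, UnitR Y) \<in> P \<Longrightarrow> derives_ctx P Y u T v \<Longrightarrow> derives_ctx P X u T v"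
| ctx_left: "(X, Bin Y Z) \<in> P \<Longrightarrow> derives_ctx P Y u T v \<Longrightarrow> derives P Z w
    \<Longrightarrow> derives_ctx P X u T (v @ w)"
| ctx_right: "(X, Bin Y Z) \<in> P \<Longrightarrow> derives P Y w \<Longrightarrow> derives_ctx P Z u T v
    \<Longrightarrow> derives_ctx P X (w @ u) T v"

lemma derives_ctx_derives: "derives_ctx P X u T v \<Longrightarrow> derives P T w \<Longrightarrow> derives P X (u @ w @ v)"
proof (induction rule: derives_ctx.induct)
  case (ctx_left X Y Z u T v w')
  then have "derives P X ((u @ w @ v) @ w')" by (blast intro: derives.bin)
  then show ?case by simp
next
  case (ctx_right X Y Z w' u T v)
  then have "derives P X (w' @ (u @ w @ v))" by (blast intro: derives.bin)
  then show ?case by simp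
qed (auto intro: derives.un)

lemma derives_ctx_trans:
  "derives_ctx P X u Y v \<Longrightarrow> derives_ctx P Y u' T v' \<Longrightarrow> derives_ctx P X (u @ u') T (v' @ v)"
proof (induction rule: derives_ctx.induct)
  case (ctx_left X Y Z u T' v w)
  then have "derives_ctx P X (u @ u') T ((v' @ v) @ w)" by (blast intro: derives_ctx.ctx_left)
  then show ?case by simp
next
  case (ctx_right X Y Z w u T' v)
  then have "derives_ctx P X (w @ (u @ u')) T (v' @ v)" by (blast intro: derives_ctx.ctx_right)
  then show ?case by simp
qed (auto intro: ctx_unit)

lemma derives_ctx_nts:
  assumes "\<forall>(X, r)\<in>P. X \<in> N \<and> rhs_nts r \<subseteq> N"
  shows "derives_ctx P X u Y v \<Longrightarrow> X \<in> N \<Longrightarrow> Y \<in> N"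
  by (induction rule: derives_ctx.induct) (use assms in \<open>fastforce simp: rhs_nts_def\<close>)+

definition nt_lang :: "('n \<times> ('n, 'a) rhs) set \<Rightarrow> 'n \<Rightarrow> 'a list set" where
  "nt_lang P X = {w. derives P X w}"

definition reachable_nts :: "('n \<times> ('n, 'a) rhs) set \<Rightarrow> 'n \<Rightarrow> 'n set" where
  "reachable_nts P X = {Y. \<exists>u v. derives_ctx P X u Y v}"

definition cfg_scc :: "('n \<times> ('n, 'a) rhs) set \<Rightarrow> 'n \<Rightarrow> 'n set" where
  "cfg_scc P X = {Y. (\<exists>u v. derives_ctx P X u Y v) \<and> (\<exists>u v. derives_ctx P Y u X v)}"

definition left_loop_letters :: "('n \<times> ('n, 'a) rhs) set \<Rightarrow> 'n \<Rightarrow> 'a set" where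
  "left_loop_letters P X = {b. \<exists>u v. derives_ctx P X u X v \<and> b \<in> set u}"

definition right_loop_letters :: "('n \<times> ('n, 'a) rhs) set \<Rightarrow> 'n \<Rightarrow> 'a set" where
  "right_loop_letters P X = {b. \<exists>u v. derives_ctx P X u X v \<and> b \<in> set v}"

fun rhs_lang :: "('n \<times> ('n, 'a) rhs) set \<Rightarrow> ('n, 'a) rhs \<Rightarrow> 'a list set" where
  "rhs_lang P (Tm a) = {[a]}"
| "rhs_lang P Eps = {[]}"
| "rhs_lang P (UnitR Z) = nt_lang P Z"
| "rhs_lang P (Bin Z1 Z2) = conc (nt_lang P Z1) (nt_lang P Z2)"

definition exit_prods :: "('n \<times> ('n, 'a) rhs) set \<Rightarrow> 'n set \<Rightarrow> ('n \<times> ('n, 'a) rhs) set" where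
  "exit_prods P C = {(Y, r). (Y, r) \<in> P \<and> Y \<in> C \<and> rhs_nts r \<inter> C = {}}"

definition cfg_exit_lang :: "('n \<times> ('n, 'a) rhs) set \<Rightarrow> 'n set \<Rightarrow> 'a list set" where
  "cfg_exit_lang P C = (\<Union>(Y, r)\<in>exit_prods P C. rhs_lang P r)"

lemma derives_if_rhs_lang: "(Y, r) \<in> P \<Longrightarrow> e \<in> rhs_lang P r \<Longrightarrow> derives P Y e"
  by (cases r) (auto simp: nt_lang_def conc_def intro: derives.intros)

lemma derivation_split_at_exit:
  assumes "derives P Z w" "Z \<in> C"
  shows "\<exists>u Y v r e. derives_ctx P Z u Y v \<and> (Y, r) \<in> exit_prods P C \<and> e \<in> rhs_lang P r
    \<and> w = u @ e @ v"
  using assms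
proof (induction rule: derives.induct)
  have exit: "\<exists>u Y v r' e. derives_ctx P X u Y v \<and> (Y, r') \<in> exit_prods P C
      \<and> e \<in> rhs_lang P r' \<and> w = u @ e @ v"
    if "(X, r) \<in> P" "X \<in> C" "rhs_nts r \<inter> C = {}" "w \<in> rhs_lang P r" for X r w
    using that ctx_refl[of P X] unfolding exit_prods_def
    by (intro exI[of _ "[]"] exI[of _ X] exI[of _ r] exI[of _ w]) auto
  {
    case (bin X Y Z u1 u2)
    consider "Y \<in> C" | "Y \<notin> C" "Z \<in> C" | "Y \<notin> C" "Z \<notin> C" by blast
    then show ?case
    proof cases
      case 1
      with bin obtain u T v r e where h: "derives_ctx P Y u T v" "(T, r) \<in> exit_prods P C"
        "e \<in> rhs_lang P r" "u1 = u @ e @ v"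
        by blast
      from ctx_left[OF bin(1) h(1) bin(3)] show ?thesis
        using h(2-4) by (intro exI[of _ u] exI[of _ T] exI[of _ "v @ u2"]) auto
    next
      case 2
      with bin obtain u T v r e where h: "derives_ctx P Z u T v" "(T, r) \<in> exit_prods P C"
        "e \<in> rhs_lang P r" "u2 = u @ e @ v"
        by blast
      from ctx_right[OF bin(1) bin(2) h(1)] show ?thesis
        using h(2-4) by (intro exI[of _ "u1 @ u"] exI[of _ T] exI[of _ v]) auto
    next
      case 3
      with bin show ?thesis
        by (intro exit[of X "Bin Y Z"]) (auto simp: rhs_nts_def nt_lang_def conc_def)
    qed
  next
    case (un X Y u)
    show ?case
    proof (cases "Y \<in> C")
      case True
      with un show ?thesis by (blast intro: ctx_unit)
    next
      case False
      with un show ?thesis by (intro exit[of X "UnitR Y"]) (auto simp: rhs_nts_def nt_lang_def)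
    qed
  next
    case (tm X a)
    then show ?case by (intro exit[of X "Tm a"]) (auto simp: rhs_nts_def)
  next
    case (eps X)
    then show ?case by (intro exit[of X Eps]) (auto simp: rhs_nts_def)
  }
qed

lemma left_loop_letters_pump:
  "s \<in> lists (left_loop_letters P X) \<Longrightarrow> \<exists>U V. derives_ctx P X U X V \<and> subseq s U"
proof (induction s)
  case Nil
  then show ?case using ctx_refl[of P X] by auto
next
  case (Cons b s)
  then obtain U V where U: "derives_ctx P X U X V" "subseq s U" by auto
  obtain u v where w: "derives_ctx P X u X v" "b \<in> set u"
    using Cons(2) unfolding left_loop_letters_def by auto
  have "subseq ([b] @ s) (u @ U)"
    using U(2) w(2) by (intro list_emb_append_mono) (auto simp: subseq_singleton_left)
  with derives_ctx_trans[OF w(1) U(1)] show ?case by auto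
qed

lemma right_loop_letters_pump:
  "s \<in> lists (right_loop_letters P X) \<Longrightarrow> \<exists>U V. derives_ctx P X U X V \<and> subseq s V"
proof (induction s)
  case Nil
  then show ?case using ctx_refl[of P X] by auto
next
  case (Cons b s)
  then obtain U V where U: "derives_ctx P X U X V" "subseq s V" by auto
  obtain u v where w: "derives_ctx P X u X v" "b \<in> set v"
    using Cons(2) unfolding right_loop_letters_def by auto
  have "subseq ([b] @ s) (v @ V)"
    using U(2) w(2) by (intro list_emb_append_mono) (auto simp: subseq_singleton_left)
  with derives_ctx_trans[OF U(1) w(1)] show ?case by auto
qed

lemma loop_letters_if_ctx_scc:
  assumes "derives_ctx P X u Y v" "Y \<in> cfg_scc P X"
  shows "u \<in> lists (left_loop_letters P X)" "v \<in> lists (right_loop_letters P X)"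
proof -
  obtain u' v' where "derives_ctx P Y u' X v'" using assms(2) unfolding cfg_scc_def by blast
  then have "derives_ctx P X (u @ u') X (v' @ v)" using assms(1) derives_ctx_trans by metis
  moreover have "set u \<subseteq> set (u @ u')" "set v \<subseteq> set (v' @ v)" by auto
  ultimately show "u \<in> lists (left_loop_letters P X)" "v \<in> lists (right_loop_letters P X)"
    unfolding left_loop_letters_def right_loop_letters_def by blast+
qed

lemma nt_lang_subset_loops:
  "nt_lang P X \<subseteq> conc (conc (lists (left_loop_letters P X)) (cfg_exit_lang P (cfg_scc P X)))
     (lists (right_loop_letters P X))" (is "_ \<subseteq> conc (conc ?L ?E) ?R")
proof
  fix w assume "w \<in> nt_lang P X"
  then have "derives P X w" unfolding nt_lang_def by simp
  moreover have "X \<in> cfg_scc P X" unfolding cfg_scc_def using ctx_refl[of P X] by blast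
  ultimately obtain u Y v r e where h: "derives_ctx P X u Y v" "(Y, r) \<in> exit_prods P (cfg_scc P X)"
    "e \<in> rhs_lang P r" "w = u @ e @ v"
    using derivation_split_at_exit[of P X w "cfg_scc P X"] by blast
  have "Y \<in> cfg_scc P X" using h(2) unfolding exit_prods_def by blast
  note uv = loop_letters_if_ctx_scc[OF h(1) this]
  have "e \<in> ?E" unfolding cfg_exit_lang_def using h(2,3) by blast
  with uv(1) have "u @ e \<in> conc ?L ?E" unfolding conc_def by blast
  moreover have "w = (u @ e) @ v" using h(4) by simp
  ultimately show "w \<in> conc (conc ?L ?E) ?R" using uv(2) unfolding conc_def by blast
qed

lemma loops_subset_down_nt_lang:
  "conc (conc (lists (left_loop_letters P X)) (cfg_exit_lang P (cfg_scc P X)))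
     (lists (right_loop_letters P X)) \<subseteq> down (nt_lang P X)" (is "conc (conc ?L ?E) ?R \<subseteq> _")
proof
  fix x assume "x \<in> conc (conc ?L ?E) ?R"
  then obtain s e s' Y r where h: "x = s @ e @ s'" "s \<in> ?L" "s' \<in> ?R"
    "(Y, r) \<in> exit_prods P (cfg_scc P X)" "e \<in> rhs_lang P r"
    unfolding conc_def cfg_exit_lang_def by force
  obtain U1 V1 where p1: "derives_ctx P X U1 X V1" "subseq s U1"
    using left_loop_letters_pump[OF h(2)] by blast
  obtain U2 V2 where p2: "derives_ctx P X U2 X V2" "subseq s' V2"
    using right_loop_letters_pump[OF h(3)] by blast
  have Y: "Y \<in> cfg_scc P X" "(Y, r) \<in> P" using h(4) unfolding exit_prods_def by auto
  obtain u v where "derives_ctx P X u Y v" using Y(1) unfolding cfg_scc_def by blast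
  then have "derives_ctx P X ((U1 @ U2) @ u) Y (v @ (V2 @ V1))"
    by (intro derives_ctx_trans[OF derives_ctx_trans[OF p1(1) p2(1)]])
  then have "derives P X (((U1 @ U2) @ u) @ e @ (v @ (V2 @ V1)))"
    using derives_if_rhs_lang[OF Y(2) h(5)] by (rule derives_ctx_derives)
  moreover have "subseq (s @ e @ s') (((U1 @ U2) @ u) @ e @ (v @ (V2 @ V1)))"
    using p1(2) p2(2) by (intro list_emb_append_mono)
      (auto simp: subseq_append' intro: subseq_drop_many subseq_rev_drop_many)
  ultimately show "x \<in> down (nt_lang P X)" unfolding down_def nt_lang_def using h(1) by auto
qed

text \<open>Every derivation from X first pumps inside the component of X and then applies one
  production leaving it; the pumping contexts can be chosen to contain any words over the loop
  letters on either side.\<close>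
lemma down_nt_lang:
  "down (nt_lang P X) = conc (conc (lists (left_loop_letters P X))
     (down (cfg_exit_lang P (cfg_scc P X)))) (lists (right_loop_letters P X))"
  using down_eq_if_between[OF nt_lang_subset_loops loops_subset_down_nt_lang]
  by (simp add: down_conc down_lists)

lemma nt_lang_eq_exit_lang_if_acyclic:
  assumes "\<And>u v. derives_ctx P X u X v \<Longrightarrow> u = [] \<and> v = []"
  shows "nt_lang P X = cfg_exit_lang P (cfg_scc P X)"
proof -
  have no_ctx: "u = [] \<and> v = []"
    if ctx: "derives_ctx P X u Y v" and scc: "Y \<in> cfg_scc P X" for u v Y
  proof -
    obtain u' v' where "derives_ctx P Y u' X v'" using scc unfolding cfg_scc_def by blast
    then show ?thesis using assms derives_ctx_trans[OF ctx] by blast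
  qed
  have XC: "X \<in> cfg_scc P X" unfolding cfg_scc_def using ctx_refl[of P X] by blast
  show ?thesis
  proof (intro equalityI subsetI)
    fix w assume "w \<in> nt_lang P X"
    then obtain u Y v r e where h: "derives_ctx P X u Y v" "(Y, r) \<in> exit_prods P (cfg_scc P X)"
      "e \<in> rhs_lang P r" "w = u @ e @ v"
      using derivation_split_at_exit[OF _ XC] unfolding nt_lang_def by blast
    then have "u = [] \<and> v = []" using no_ctx unfolding exit_prods_def by blast
    then show "w \<in> cfg_exit_lang P (cfg_scc P X)" unfolding cfg_exit_lang_def using h by auto
  next
    fix w assume "w \<in> cfg_exit_lang P (cfg_scc P X)"
    then obtain Y r where h: "(Y, r) \<in> exit_prods P (cfg_scc P X)" "w \<in> rhs_lang P r"
      unfolding cfg_exit_lang_def by blast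
    then have Y: "Y \<in> cfg_scc P X" "(Y, r) \<in> P" unfolding exit_prods_def by auto
    then obtain u v where "derives_ctx P X u Y v" unfolding cfg_scc_def by blast
    with no_ctx[OF this Y(1)] have "derives_ctx P X [] Y []" by simp
    from derives_ctx_derives[OF this derives_if_rhs_lang[OF Y(2) h(2)]]
    show "w \<in> nt_lang P X" unfolding nt_lang_def by simp
  qed
qed

lemma down_strict_nt_lang_if_cycle:
  assumes "derives_ctx P X u X v" "u @ v \<noteq> []"
  shows "down_strict (nt_lang P X) = down (nt_lang P X)"
proof (rule down_strict_eq_down)
  fix w assume "w \<in> nt_lang P X"
  then have "u @ w @ v \<in> nt_lang P X"
    using derives_ctx_derives[OF assms(1)] unfolding nt_lang_def by blast
  moreover have "strict_subseq w (u @ w @ v)"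
    using assms(2) by (auto simp: strict_subseq_iff intro: subseq_drop_many subseq_rev_drop_many)
  ultimately show "\<exists>w'\<in>nt_lang P X. strict_subseq w w'" by blast
qed

definition cfg_bound :: "nat \<Rightarrow> nat" where
  "cfg_bound n = 4 * 3 ^ (n - 1) + 1"

lemma cfg_bound_ge: "5 \<le> cfg_bound n"
  unfolding cfg_bound_def by simp

lemma cfg_bound_mono: "m \<le> n \<Longrightarrow> cfg_bound m \<le> cfg_bound n"
  unfolding cfg_bound_def by (simp add: power_increasing)

lemma cfg_bound_step:
  assumes "0 < m" "m < n"
  shows "2 * cfg_bound m + 2 \<le> cfg_bound n"
proof -
  have "cfg_bound m \<le> cfg_bound (n - 1)" using assms by (intro cfg_bound_mono) simp
  moreover have "cfg_bound n = 3 * (cfg_bound (n - 1) - 1) + 1"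
    using assms unfolding cfg_bound_def by (cases n) (auto simp: power_eq_if)
  ultimately show ?thesis using cfg_bound_ge[of "n - 1"] by linarith
qed

lemma reachable_nts_subset:
  assumes "\<forall>(X, r)\<in>P. X \<in> N \<and> rhs_nts r \<subseteq> N" "X \<in> N"
  shows "reachable_nts P X \<subseteq> N"
  unfolding reachable_nts_def using derives_ctx_nts[OF assms(1)] assms(2) by blast

lemma card_reachable_nts_exit:
  assumes wf: "finite N" "\<forall>(X, r)\<in>P. X \<in> N \<and> rhs_nts r \<subseteq> N" and X: "X \<in> N"
    and Y: "Y \<in> cfg_scc P X" and ctx: "derives_ctx P Y u Z v" and Z: "Z \<notin> cfg_scc P X"
  shows "Z \<in> N" "0 < card (reachable_nts P Z)"
    "card (reachable_nts P Z) < card (reachable_nts P X)"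
proof -
  obtain u' v' where "derives_ctx P X u' Y v'" using Y unfolding cfg_scc_def by blast
  from derives_ctx_trans[OF this ctx] have XZ: "derives_ctx P X (u' @ u) Z (v @ v')" .
  then show ZN: "Z \<in> N" using derives_ctx_nts[OF wf(2)] X by blast
  have self: "T \<in> reachable_nts P T" for T unfolding reachable_nts_def using ctx_refl[of P T] by blast
  have "reachable_nts P Z \<subseteq> reachable_nts P X"
    unfolding reachable_nts_def using derives_ctx_trans[OF XZ] by blast
  moreover have "X \<notin> reachable_nts P Z" using Z XZ unfolding reachable_nts_def cfg_scc_def by blast
  ultimately have "reachable_nts P Z \<subset> reachable_nts P X" using self[of X] by blast
  then show "card (reachable_nts P Z) < card (reachable_nts P X)"
    using reachable_nts_subset[OF wf(2) X] wf(1) by (meson psubset_card_mono rev_finite_subset)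
  show "0 < card (reachable_nts P Z)"
    using self[of Z] reachable_nts_subset[OF wf(2) ZN] wf(1) card_gt_0_iff finite_subset by blast
qed

lemma ideal_closures_below_exit:
  assumes wf: "finite N" "\<forall>(X, r)\<in>P. X \<in> N \<and> rhs_nts r \<subseteq> N" and X: "X \<in> N"
    and IH: "\<And>Z. card (reachable_nts P Z) < card (reachable_nts P X) \<Longrightarrow> Z \<in> N \<Longrightarrow>
       ideal_closures (cfg_bound (card (reachable_nts P Z))) (nt_lang P Z)"
    and "Y \<in> cfg_scc P X" "derives_ctx P Y u Z v" "Z \<notin> cfg_scc P X"
  shows "ideal_closures (cfg_bound (card (reachable_nts P Z))) (nt_lang P Z)"
    "2 * cfg_bound (card (reachable_nts P Z)) + 2 \<le> cfg_bound (card (reachable_nts P X))"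
proof -
  note c = card_reachable_nts_exit[OF wf X assms(5-7)]
  show "ideal_closures (cfg_bound (card (reachable_nts P Z))) (nt_lang P Z)" by (rule IH[OF c(3,1)])
  show "2 * cfg_bound (card (reachable_nts P Z)) + 2 \<le> cfg_bound (card (reachable_nts P X))"
    by (rule cfg_bound_step[OF c(2,3)])
qed

text \<open>An exit production combines at most two nonterminals of smaller rank, whence the factor 3
  in the bound.\<close>
lemma ideal_closures_exit_rhs:
  assumes wf: "finite N" "\<forall>(X, r)\<in>P. X \<in> N \<and> rhs_nts r \<subseteq> N" and X: "X \<in> N"
    and IH: "\<And>Z. card (reachable_nts P Z) < card (reachable_nts P X) \<Longrightarrow> Z \<in> N \<Longrightarrow>
       ideal_closures (cfg_bound (card (reachable_nts P Z))) (nt_lang P Z)"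
    and exit: "(Y, r) \<in> exit_prods P (cfg_scc P X)"
  shows "ideal_closures (cfg_bound (card (reachable_nts P X)) - 2) (rhs_lang P r)"
proof -
  let ?n = "cfg_bound (card (reachable_nts P X))" and ?b = "\<lambda>Z. cfg_bound (card (reachable_nts P Z))"
  have Y: "Y \<in> cfg_scc P X" "(Y, r) \<in> P" and disj: "rhs_nts r \<inter> cfg_scc P X = {}"
    using exit unfolding exit_prods_def by auto
  have child: "ideal_closures (?b Z) (nt_lang P Z) \<and> 2 * ?b Z + 2 \<le> ?n"
    if "derives_ctx P Y u Z v" "Z \<in> rhs_nts r" for u v Z
    using ideal_closures_below_exit[OF wf X IH Y(1) that(1)] disj that(2) by blast
  show ?thesis
  proof (cases r)
    case (Bin Z1 Z2)
    show ?thesis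
    proof (cases "nt_lang P Z1 = {} \<or> nt_lang P Z2 = {}")
      case True
      then show ?thesis using Bin by (auto simp: ideal_closures_empty)
    next
      case False
      then obtain w1 w2 where w: "derives P Z1 w1" "derives P Z2 w2" unfolding nt_lang_def by blast
      have YZ: "(Y, Bin Z1 Z2) \<in> P" using Y(2) Bin by simp
      have r: "Z1 \<in> rhs_nts r" "Z2 \<in> rhs_nts r" using Bin by (simp_all add: rhs_nts_def)
      note c1 = child[OF ctx_left[OF YZ ctx_refl w(2)] r(1)]
      note c2 = child[OF ctx_right[OF YZ w(1) ctx_refl] r(2)]
      have "ideal_closures (?b Z1 + ?b Z2) (rhs_lang P r)"
        using Bin c1 c2 by (simp add: ideal_closures_conc)
      moreover have "?b Z1 + ?b Z2 \<le> ?n - 2" using c1 c2 by linarith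
      ultimately show ?thesis by (rule ideal_closures_mono)
    qed
  next
    case (UnitR Z)
    then have "(Y, UnitR Z) \<in> P" "Z \<in> rhs_nts r" using Y(2) by (simp_all add: rhs_nts_def)
    note c = child[OF ctx_unit[OF this(1) ctx_refl] this(2)]
    then have "?b Z \<le> ?n - 2" by linarith
    with c UnitR show ?thesis using ideal_closures_mono by auto
  next
    case (Tm a)
    have "1 \<le> ?n - 2" using cfg_bound_ge[of "card (reachable_nts P X)"] by linarith
    with Tm show ?thesis by (simp add: ideal_closures_mono[OF ideal_closures_singleton])
  next
    case Eps
    then show ?thesis by (simp add: ideal_closures_Nil)
  qed
qed

lemma ideal_closures_nt_lang:
  assumes wf: "finite N" "\<forall>(X, r)\<in>P. X \<in> N \<and> rhs_nts r \<subseteq> N"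
  shows "X \<in> N \<Longrightarrow> ideal_closures (cfg_bound (card (reachable_nts P X))) (nt_lang P X)"
proof (induction "card (reachable_nts P X)" arbitrary: X rule: less_induct)
  case (less X)
  let ?C = "cfg_scc P X" and ?n = "cfg_bound (card (reachable_nts P X))"
  have exits: "ideal_closures (?n - 2) (cfg_exit_lang P ?C)"
    unfolding cfg_exit_lang_def
    using ideal_closures_exit_rhs[OF wf less.prems less.hyps] by (auto intro!: ideal_closures_UN)
  have "ideal_union (1 + (?n - 2) + 1) (down (nt_lang P X))"
    using exits unfolding down_nt_lang ideal_closures_def
    by (intro ideal_union_conc ideal_union_lists) auto
  moreover have "1 + (?n - 2) + 1 = ?n" using cfg_bound_ge[of "card (reachable_nts P X)"] by arith
  ultimately have down: "ideal_union ?n (down (nt_lang P X))" by simp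
  show ?case
  proof (cases "\<exists>u v. derives_ctx P X u X v \<and> u @ v \<noteq> []")
    case True
    then show ?thesis
      using down down_strict_nt_lang_if_cycle unfolding ideal_closures_def by metis
  next
    case False
    then have "nt_lang P X = cfg_exit_lang P ?C"
      by (intro nt_lang_eq_exit_lang_if_acyclic) blast
    then have "ideal_union (?n - 2) (down_strict (nt_lang P X))"
      using exits unfolding ideal_closures_def by simp
    with down show ?thesis unfolding ideal_closures_def by (meson diff_le_self ideal_union_mono)
  qed
qed

theorem theorem14:
  fixes M :: "('s, 'a::finite) nfa" and G :: "('n, 'a) cfg"
    and L :: "'a list set" and m N :: nat
  shows "(wf_nfa M \<and> L = nfa_lang M \<and> nfa_depth M = m \<longrightarrow>
            is_PT (2 * m + 2) (down L) \<and> is_PT (2 * m + 2) (down_strict L))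
       \<and> (wf_qnf G \<and> L = cfg_lang G \<and> card (nts G) = N \<longrightarrow>
            is_PT (4 * 3 ^ (N - 1) + 2) (down L) \<and> is_PT (4 * 3 ^ (N - 1) + 2) (down_strict L))"
proof (rule conjI; rule impI)
  assume "wf_nfa M \<and> L = nfa_lang M \<and> nfa_depth M = m"
  then have "ideal_closures (2 * m + 1) L" using ideal_closures_nfa_lang[of M] by simp
  moreover have "Suc (2 * m + 1) = 2 * m + 2" by simp
  ultimately show "is_PT (2 * m + 2) (down L) \<and> is_PT (2 * m + 2) (down_strict L)"
    using is_PT_if_ideal_closures by metis
next
  assume G: "wf_qnf G \<and> L = cfg_lang G \<and> card (nts G) = N"
  then have wf: "finite (nts G)" "\<forall>(X, r)\<in>prods G. X \<in> nts G \<and> rhs_nts r \<subseteq> nts G"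
    and start: "start G \<in> nts G"
    unfolding wf_qnf_def by auto
  have L: "L = nt_lang (prods G) (start G)" using G unfolding cfg_lang_def nt_lang_def by simp
  have "card (reachable_nts (prods G) (start G)) \<le> N"
    using G card_mono[OF wf(1) reachable_nts_subset[OF wf(2) start]] by simp
  from ideal_closures_mono[OF ideal_closures_nt_lang[OF wf start] cfg_bound_mono[OF this]]
  have "ideal_closures (cfg_bound N) L" unfolding L .
  moreover have "Suc (cfg_bound N) = 4 * 3 ^ (N - 1) + 2" unfolding cfg_bound_def by simp
  ultimately show "is_PT (4 * 3 ^ (N - 1) + 2) (down L) \<and> is_PT (4 * 3 ^ (N - 1) + 2) (down_strict L)"
    using is_PT_if_ideal_closures by metis
qed

end
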